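(* Let $q$ be a prime power, $s\ge 2$, $d\ge 0$ integers, and let $P\in\mathbb{F}_q[x_1,\dots,x_s]$ be a homogeneous polynomial with $\deg(P)=d$. Then there exist $\lfloor q/(d+1)\rfloor^{s-1}$ subsets of $\mathbb{F}_q^s$, each of size $(d+1)^{s-1}$, each of which is an interpolation set of $P$, and which are pairwise disjoint under multiplication.
   Context: A polynomial is homogeneous if all its monomials have the same total degree. A set $R\subseteq\mathbb{F}_q^s$ is an interpolation set of the homogeneous polynomial $P$ of degree $d$ if for every homogeneous polynomial $Q$ of degree $d$ with $P(\boldsymbol{x})=Q(\boldsymbol{x})$ for all $\boldsymbol{x}\in R$, one has $P(\boldsymbol{x})=Q(\boldsymbol{x})$ for all $\boldsymbol{x}\in\mathbb{F}_q^s$. Two sets $S_1,S_2\subseteq\mathbb{F}_q^s$ are disjoint under multiplication if for every $\boldsymbol{x}\in S_1$ and every $\alpha\in\mathbb{F}_q\setminus\{0\}$, $\alpha\boldsymbol{x}\notin S_2$. *)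

theory Defs
  imports Main
begin

text \<open>Points of F_q^s are functions 'n \<Rightarrow> 'a with 'n a finite index type, CARD('n) = s. A polynomial in s variables is represented
  by its coefficient function on exponent vectors.\<close>

definition total_deg :: "('n::finite \<Rightarrow> nat) \<Rightarrow> nat" where
  "total_deg \<alpha> = (\<Sum>i\<in>UNIV. \<alpha> i)"

definition homog_of_deg :: "nat \<Rightarrow> (('n::finite \<Rightarrow> nat) \<Rightarrow> 'a::field) \<Rightarrow> bool" where
  "homog_of_deg d c \<longleftrightarrow> (\<forall>\<alpha>. c \<alpha> \<noteq> 0 \<longrightarrow> total_deg \<alpha> = d)"

definition hpoly_eval :: "nat \<Rightarrow> (('n::finite \<Rightarrow> nat) \<Rightarrow> 'a::field) \<Rightarrow> ('n \<Rightarrow> 'a) \<Rightarrow> 'a" where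
  "hpoly_eval d c x = (\<Sum>\<alpha>\<in>{\<alpha>. total_deg \<alpha> = d}. c \<alpha> * (\<Prod>i\<in>UNIV. x i ^ \<alpha> i))"

definition interpolation_set :: "nat \<Rightarrow> (('n::finite \<Rightarrow> nat) \<Rightarrow> 'a::field) \<Rightarrow> ('n \<Rightarrow> 'a) set \<Rightarrow> bool" where
  "interpolation_set d P R \<longleftrightarrow>
     (\<forall>Q. homog_of_deg d Q \<longrightarrow> (\<forall>x\<in>R. hpoly_eval d P x = hpoly_eval d Q x)
          \<longrightarrow> (\<forall>x. hpoly_eval d P x = hpoly_eval d Q x))"

definition disjoint_under_mult :: "('n \<Rightarrow> 'a::field) set \<Rightarrow> ('n \<Rightarrow> 'a) set \<Rightarrow> bool" where
  "disjoint_under_mult S1 S2 \<longleftrightarrow> (\<forall>x\<in>S1. \<forall>a. a \<noteq> 0 \<longrightarrow> (\<lambda>i. a * x i) \<notin> S2)"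

end

theory Submission
  imports Defs "HOL-Computational_Algebra.Polynomial" "HOL-Library.FuncSet" "HOL-Library.Disjoint_Sets"
begin

text \<open>Fix a coordinate \<open>i0\<close>. An exponent vector of total degree \<open>d\<close> is determined by its
  entries off \<open>i0\<close>, so on the slice \<open>x i0 = 1\<close> a homogeneous polynomial of degree \<open>d\<close> is a
  polynomial of degree at most \<open>d\<close> in each remaining variable, whose coefficients are those of
  the original one. Hence every product grid on that slice whose other factors have \<open>d + 1\<close>
  points is an interpolation set: summing over the grid with weights that form a dual basis to
  the powers \<open>a ^ f\<close>, \<open>f \<le> d\<close>, in each coordinate extracts a single coefficient. Cutting the
  field into \<open>q div (d + 1)\<close> disjoint blocks of \<open>d + 1\<close> elements and using one block per
  coordinate yields the family; a scalar multiple carrying one such grid into another must fix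
  the coordinate \<open>1\<close>, hence is the identity, but two distinct grids use disjoint blocks in
  some coordinate.\<close>

lemma ex_lagrange_basis_poly:
  fixes A :: "'a::field set"
  assumes "finite A" "a \<in> A"
  shows "\<exists>L. degree L < card A \<and> (\<forall>c\<in>A. poly L c = (if c = a then 1 else 0))"
proof -
  define L where "L = smult (inverse (\<Prod>b\<in>A-{a}. a - b)) (\<Prod>b\<in>A-{a}. [:-b, 1:])"
  have "degree L \<le> degree (\<Prod>b\<in>A-{a}. [:-b, 1:])"
    unfolding L_def by (rule degree_smult_le)
  also have "\<dots> \<le> card (A - {a})"
    using degree_prod_sum_le[of "A-{a}" "\<lambda>b. [:-b, 1::'a:]"] assms(1) by (simp add: o_def)
  also have "\<dots> < card A"
    using assms by (rule card_Diff1_less)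
  finally have "degree L < card A" .
  moreover have "poly L c = (if c = a then 1 else 0)" if "c \<in> A" for c
  proof (cases "c = a")
    case True
    have "(\<Prod>b\<in>A-{a}. a - b) \<noteq> 0" using assms(1) by auto
    then show ?thesis using True by (simp add: L_def poly_prod)
  next
    case False
    then have "(\<Prod>b\<in>A-{a}. c - b) = 0" using assms(1) that by (intro prod_zero) auto
    then show ?thesis using False by (simp add: L_def poly_prod)
  qed
  ultimately show ?thesis by blast
qed

text \<open>The weights are the \<open>e\<close>-th coefficients of the Lagrange basis polynomials of \<open>A\<close>:
  for \<open>f < card A\<close> interpolation gives \<open>X ^ f = (\<Sum>a\<in>A. a ^ f \<cdot> L\<^sub>a)\<close>; compare coefficients.\<close>
lemma ex_power_sum_weights:
  fixes A :: "'a::field set"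
  assumes "finite A" "e < card A"
  shows "\<exists>w. \<forall>f < card A. (\<Sum>a\<in>A. w a * a ^ f) = (if f = e then 1 else 0)"
proof -
  obtain L where L: "\<And>a. a \<in> A \<Longrightarrow> degree (L a) < card A"
      "\<And>a c. a \<in> A \<Longrightarrow> c \<in> A \<Longrightarrow> poly (L a) c = (if c = a then 1 else 0)"
    using ex_lagrange_basis_poly[OF assms(1)] by metis
  have "(\<Sum>a\<in>A. coeff (L a) e * a ^ f) = (if f = e then 1 else 0)" if "f < card A" for f
  proof -
    have "monom 1 f = (\<Sum>a\<in>A. smult (a ^ f) (L a))"
    proof (rule poly_eqI_degree[of A])
      fix x assume "x \<in> A"
      then have "(\<Sum>a\<in>A. a ^ f * poly (L a) x) = (\<Sum>a\<in>A. if a = x then a ^ f else 0)"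
        by (intro sum.cong) (auto simp: L(2))
      with \<open>x \<in> A\<close> assms(1)
      show "poly (monom 1 f) x = poly (\<Sum>a\<in>A. smult (a ^ f) (L a)) x"
        by (simp add: poly_monom poly_sum)
    next
      show "degree (monom (1::'a) f) < card A"
        using that by (simp add: degree_monom_eq)
      show "degree (\<Sum>a\<in>A. smult (a ^ f) (L a)) < card A"
        using assms(2) L(1) by (intro degree_sum_less) (auto intro: le_less_trans[OF degree_smult_le])
    qed
    then have "coeff (monom 1 f) e = (\<Sum>a\<in>A. coeff (L a) e * a ^ f)"
      by (simp add: coeff_sum mult.commute)
    then show ?thesis by (simp add: coeff_monom)
  qed
  then show ?thesis by (intro exI[of _ "\<lambda>a. coeff (L a) e"]) simp
qed

lemma le_total_deg: "\<alpha> i \<le> total_deg \<alpha>"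
  unfolding total_deg_def by (rule member_le_sum) auto

lemma finite_total_deg_eq: "finite {\<alpha>::'n::finite \<Rightarrow> nat. total_deg \<alpha> = d}"
proof (rule finite_subset)
  show "{\<alpha>::'n \<Rightarrow> nat. total_deg \<alpha> = d} \<subseteq> (\<Pi>\<^sub>E i\<in>UNIV. {..d})"
    using le_total_deg by (fastforce simp: PiE_UNIV_domain)
qed (rule finite_PiE; simp)

lemma eq_if_total_deg_eq_and_agree_except:
  fixes \<alpha> \<beta> :: "'n::finite \<Rightarrow> nat"
  assumes "total_deg \<alpha> = total_deg \<beta>" and "\<And>i. i \<noteq> i0 \<Longrightarrow> \<alpha> i = \<beta> i"
  shows "\<alpha> = \<beta>"
proof
  have "total_deg \<gamma> = \<gamma> i0 + (\<Sum>i\<in>UNIV-{i0}. \<gamma> i)" for \<gamma> :: "'n \<Rightarrow> nat"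
    unfolding total_deg_def by (simp add: sum.remove)
  moreover have "(\<Sum>i\<in>UNIV-{i0}. \<alpha> i) = (\<Sum>i\<in>UNIV-{i0}. \<beta> i)"
    using assms(2) by (intro sum.cong) auto
  ultimately show "\<alpha> i = \<beta> i" for i
    using assms by (cases "i = i0") auto
qed

lemma hpoly_eval_diff:
  "hpoly_eval d P x - hpoly_eval d Q x = hpoly_eval d (\<lambda>\<alpha>. P \<alpha> - Q \<alpha>) x"
  unfolding hpoly_eval_def by (simp add: sum_subtractf left_diff_distrib)

lemma sum_PiE_weighted_hpoly_eval:
  fixes G :: "'n::finite \<Rightarrow> 'a::field set"
  assumes "\<And>i. finite (G i)"
  shows "(\<Sum>x\<in>(\<Pi>\<^sub>E i\<in>UNIV. G i). (\<Prod>i\<in>UNIV. w i (x i)) * hpoly_eval d D x)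
       = (\<Sum>\<beta>\<in>{\<beta>. total_deg \<beta> = d}. D \<beta> * (\<Prod>i\<in>UNIV. \<Sum>a\<in>G i. w i a * a ^ \<beta> i))"
proof -
  have "(\<Sum>x\<in>(\<Pi>\<^sub>E i\<in>UNIV. G i). (\<Prod>i\<in>UNIV. w i (x i)) * hpoly_eval d D x)
      = (\<Sum>\<beta>\<in>{\<beta>. total_deg \<beta> = d}. D \<beta> * (\<Sum>x\<in>(\<Pi>\<^sub>E i\<in>UNIV. G i). \<Prod>i\<in>UNIV. w i (x i) * x i ^ \<beta> i))"
    unfolding hpoly_eval_def sum_distrib_left
    by (subst sum.swap) (simp add: prod.distrib mult_ac)
  also have "\<dots> = (\<Sum>\<beta>\<in>{\<beta>. total_deg \<beta> = d}. D \<beta> * (\<Prod>i\<in>UNIV. \<Sum>a\<in>G i. w i a * a ^ \<beta> i))"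
    using assms by (simp add: prod_sum_PiE)
  finally show ?thesis .
qed

definition unit_slice_grid :: "'n::finite \<Rightarrow> ('n \<Rightarrow> 'a::field set) \<Rightarrow> ('n \<Rightarrow> 'a) set" where
  "unit_slice_grid i0 C = (\<Pi>\<^sub>E i\<in>UNIV. if i = i0 then {1} else C i)"

lemma mem_unit_slice_grid_iff:
  "x \<in> unit_slice_grid i0 C \<longleftrightarrow> x i0 = 1 \<and> (\<forall>i. i \<noteq> i0 \<longrightarrow> x i \<in> C i)"
  unfolding unit_slice_grid_def PiE_UNIV_domain Pi_iff by force

lemma card_unit_slice_grid:
  fixes C :: "'n::finite \<Rightarrow> 'a::field set"
  assumes "\<And>i. i \<noteq> i0 \<Longrightarrow> card (C i) = k"
  shows "card (unit_slice_grid i0 C) = k ^ (card (UNIV :: 'n set) - 1)"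
proof -
  have "card (unit_slice_grid i0 C) = (\<Prod>i\<in>UNIV. if i = i0 then 1 else k)"
    unfolding unit_slice_grid_def by (simp add: card_PiE) (intro prod.cong; simp add: assms)
  also have "\<dots> = (\<Prod>i\<in>UNIV-{i0}. k)"
    by (simp add: prod.remove[where x=i0])
  also have "\<dots> = k ^ (card (UNIV :: 'n set) - 1)"
    by (simp add: card_Diff_singleton)
  finally show ?thesis .
qed

lemma disjoint_under_mult_unit_slice_grid:
  assumes "i \<noteq> i0" and "C i \<inter> D i = {}"
  shows "disjoint_under_mult (unit_slice_grid i0 C) (unit_slice_grid i0 D)"
  unfolding disjoint_under_mult_def
proof (intro ballI allI impI notI)
  fix x a assume x: "x \<in> unit_slice_grid i0 C" and "a \<noteq> 0"
    and ax: "(\<lambda>i. a * x i) \<in> unit_slice_grid i0 D"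
  have "x i0 = 1" and "a * x i0 = 1"
    using x ax by (simp_all add: mem_unit_slice_grid_iff)
  then have "a = 1" by simp
  then show False
    using x ax assms by (auto simp: mem_unit_slice_grid_iff)
qed

lemma coeff_eq_zero_if_hpoly_eval_vanishes_on_unit_slice_grid:
  fixes D :: "('n::finite \<Rightarrow> nat) \<Rightarrow> 'a::field"
  assumes card_C: "\<And>i. i \<noteq> i0 \<Longrightarrow> card (C i) = d + 1"
    and vanish: "\<forall>x\<in>unit_slice_grid i0 C. hpoly_eval d D x = 0"
    and deg: "total_deg \<alpha> = d"
  shows "D \<alpha> = 0"
proof -
  define G where "G i = (if i = i0 then {1} else C i)" for i
  have fin_G: "finite (G i)" for i
    using card_C[of i] by (cases "i = i0") (auto simp: G_def intro: card_ge_0_finite)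
  have "\<exists>w. \<forall>f\<le>d. (\<Sum>a\<in>G i. w a * a ^ f) = (if i = i0 \<or> f = \<alpha> i then 1 else 0)" for i
  proof (cases "i = i0")
    case True
    then show ?thesis by (intro exI[of _ "\<lambda>_. 1"]) (simp add: G_def)
  next
    case False
    have "\<alpha> i < card (C i)" using le_total_deg[of \<alpha> i] deg card_C[OF False] by simp
    with fin_G[of i] obtain v
      where "\<forall>f < card (C i). (\<Sum>a\<in>C i. v a * a ^ f) = (if f = \<alpha> i then 1 else 0)"
      using ex_power_sum_weights[of "C i" "\<alpha> i"] by (auto simp: G_def False)
    then show ?thesis
      using False card_C[OF False] by (intro exI[of _ v]) (simp add: G_def less_Suc_eq_le)
  qed
  then obtain w where w: "\<And>i f. f \<le> d \<Longrightarrow>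
      (\<Sum>a\<in>G i. w i a * a ^ f) = (if i = i0 \<or> f = \<alpha> i then 1 else 0)"
    by metis
  have "0 = (\<Sum>x\<in>(\<Pi>\<^sub>E i\<in>UNIV. G i). (\<Prod>i\<in>UNIV. w i (x i)) * hpoly_eval d D x)"
    using vanish by (simp add: unit_slice_grid_def G_def)
  also have "\<dots> = (\<Sum>\<beta>\<in>{\<beta>. total_deg \<beta> = d}. D \<beta> * (\<Prod>i\<in>UNIV. \<Sum>a\<in>G i. w i a * a ^ \<beta> i))"
    using fin_G by (rule sum_PiE_weighted_hpoly_eval)
  also have "\<dots> = (\<Sum>\<beta>\<in>{\<beta>. total_deg \<beta> = d}. if \<beta> = \<alpha> then D \<beta> else 0)"
  proof (rule sum.cong)
    fix \<beta> :: "'n \<Rightarrow> nat" assume "\<beta> \<in> {\<beta>. total_deg \<beta> = d}"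
    then have deg_\<beta>: "total_deg \<beta> = d" by simp
    have "(\<Prod>i\<in>UNIV. \<Sum>a\<in>G i. w i a * a ^ \<beta> i) = (\<Prod>i\<in>UNIV. if i = i0 \<or> \<beta> i = \<alpha> i then 1 else 0)"
      using le_total_deg[of \<beta>] by (intro prod.cong) (simp_all add: w deg_\<beta>)
    also have "\<dots> = (if \<beta> = \<alpha> then 1 else 0)"
      using eq_if_total_deg_eq_and_agree_except[of \<beta> \<alpha> i0] deg deg_\<beta>
      by (auto intro: prod_zero)
    finally have "(\<Prod>i\<in>UNIV. \<Sum>a\<in>G i. w i a * a ^ \<beta> i) = (if \<beta> = \<alpha> then 1 else 0)" .
    then show "D \<beta> * (\<Prod>i\<in>UNIV. \<Sum>a\<in>G i. w i a * a ^ \<beta> i) = (if \<beta> = \<alpha> then D \<beta> else 0)"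
      by simp
  qed simp
  also have "\<dots> = D \<alpha>"
    by (simp add: deg finite_total_deg_eq)
  finally show ?thesis by simp
qed

lemma interpolation_set_unit_slice_grid:
  fixes P :: "('n::finite \<Rightarrow> nat) \<Rightarrow> 'a::field"
  assumes "\<And>i. i \<noteq> i0 \<Longrightarrow> card (C i) = d + 1"
  shows "interpolation_set d P (unit_slice_grid i0 C)"
  unfolding interpolation_set_def
proof (intro allI impI)
  fix Q :: "('n \<Rightarrow> nat) \<Rightarrow> 'a" and x
  assume "\<forall>x\<in>unit_slice_grid i0 C. hpoly_eval d P x = hpoly_eval d Q x"
  then have vanish: "\<forall>x\<in>unit_slice_grid i0 C. hpoly_eval d (\<lambda>\<alpha>. P \<alpha> - Q \<alpha>) x = 0"
    by (simp add: hpoly_eval_diff[symmetric])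
  have "P \<alpha> = Q \<alpha>" if "total_deg \<alpha> = d" for \<alpha>
    using coeff_eq_zero_if_hpoly_eval_vanishes_on_unit_slice_grid[OF assms vanish that] by simp
  then show "hpoly_eval d P x = hpoly_eval d Q x"
    unfolding hpoly_eval_def by (intro sum.cong) auto
qed

lemma disjoint_family_on_blocks:
  "disjoint_family_on (\<lambda>t::nat. {t * k..<(t + 1) * k}) UNIV"
  unfolding disjoint_family_on_def
proof (intro ballI impI)
  have "{t * k..<(t + 1) * k} \<inter> {t' * k..<(t' + 1) * k} = {}" if "t < t'" for t t'
  proof -
    have "(t + 1) * k \<le> t' * k" using that by (intro mult_le_mono1) simp
    then show ?thesis by auto
  qed
  then show "{t * k..<(t + 1) * k} \<inter> {t' * k..<(t' + 1) * k} = {}" if "t \<noteq> t'" for t t'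
    using that by (metis Int_commute linorder_neqE_nat)
qed

lemma ex_disjoint_blocks:
  fixes A :: "'a set"
  assumes "finite A"
  shows "\<exists>B. (\<forall>t < card A div k. B t \<subseteq> A \<and> card (B t) = k)
           \<and> disjoint_family_on B {..<card A div k}"
proof -
  obtain f where f: "bij_betw f {0..<card A} A"
    using ex_bij_betw_nat_finite[OF assms] by blast
  define I where "I t = {t * k..<(t + 1) * k}" for t
  have I_sub: "I t \<subseteq> {0..<card A}" if "t < card A div k" for t
  proof -
    have "(t + 1) * k \<le> card A div k * k" using that by (intro mult_le_mono1) simp
    also have "\<dots> \<le> card A" by (rule div_times_less_eq_dividend)
    finally show ?thesis by (auto simp: I_def)
  qed
  have inj: "inj_on f {0..<card A}" using f by (rule bij_betw_imp_inj_on)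
  have "f ` I t \<subseteq> A \<and> card (f ` I t) = k" if "t < card A div k" for t
    using I_sub[OF that] f card_image[OF inj_on_subset[OF inj I_sub[OF that]]]
    by (auto simp: I_def bij_betw_def)
  moreover have "disjoint_family_on (\<lambda>t. f ` I t) {..<card A div k}"
    unfolding disjoint_family_on_def
  proof (intro ballI impI)
    fix t t' assume tt': "t \<in> {..<card A div k}" "t' \<in> {..<card A div k}" "t \<noteq> t'"
    have "f ` I t \<inter> f ` I t' = f ` (I t \<inter> I t')"
      using tt' I_sub by (metis inj_on_image_Int[OF inj] lessThan_iff)
    also have "I t \<inter> I t' = {}"
      using disjoint_family_onD[OF disjoint_family_on_blocks, of t t' k] tt' by (simp add: I_def)
    finally show "f ` I t \<inter> f ` I t' = {}" by simp
  qed
  ultimately show ?thesis by (intro exI[of _ "\<lambda>t. f ` I t"] conjI) auto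
qed

lemma ex_enum_funs_except:
  fixes i0 :: "'n::finite" and m :: nat
  obtains h :: "nat \<Rightarrow> 'n \<Rightarrow> nat" where
    "\<And>j i. j < m ^ (card (UNIV :: 'n set) - 1) \<Longrightarrow> i \<noteq> i0 \<Longrightarrow> h j i < m"
    "\<And>j k. j < m ^ (card (UNIV :: 'n set) - 1) \<Longrightarrow> k < m ^ (card (UNIV :: 'n set) - 1) \<Longrightarrow>
       j \<noteq> k \<Longrightarrow> \<exists>i. i \<noteq> i0 \<and> h j i \<noteq> h k i"
proof -
  define T where "T = (\<Pi>\<^sub>E i\<in>UNIV-{i0}. {..<m})"
  have "card T = m ^ (card (UNIV :: 'n set) - 1)"
    by (simp add: T_def card_PiE card_Diff_singleton)
  then obtain h where h: "bij_betw h {0..<m ^ (card (UNIV :: 'n set) - 1)} T"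
    using ex_bij_betw_nat_finite[of T] by (auto simp: T_def finite_PiE)
  show thesis
  proof
    show "h j i < m" if "j < m ^ (card (UNIV :: 'n set) - 1)" "i \<noteq> i0" for j i
    proof -
      have "h j \<in> T" using that(1) bij_betwE[OF h] by simp
      then show ?thesis using that(2) by (auto simp: T_def PiE_iff)
    qed
    show "\<exists>i. i \<noteq> i0 \<and> h j i \<noteq> h k i"
      if "j < m ^ (card (UNIV :: 'n set) - 1)" "k < m ^ (card (UNIV :: 'n set) - 1)" "j \<noteq> k" for j k
    proof -
      have "h j \<noteq> h k" using that bij_betw_imp_inj_on[OF h] by (auto dest: inj_onD)
      moreover have "h j i0 = h k i0"
        using that bij_betwE[OF h] PiE_arb[of "h _" "UNIV-{i0}" "\<lambda>_. {..<m}" i0] by (simp add: T_def)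
      ultimately show ?thesis by (metis ext)
    qed
  qed
qed

theorem lemma3:
  fixes P :: "('n::finite \<Rightarrow> nat) \<Rightarrow> 'a::{finite,field}"
    and d :: nat
  assumes "card (UNIV :: 'n set) \<ge> 2"
    and "homog_of_deg d P"
    and "\<exists>\<alpha>. P \<alpha> \<noteq> 0"
  shows "\<exists>S :: nat \<Rightarrow> ('n \<Rightarrow> 'a) set.
           (\<forall>j < (card (UNIV :: 'a set) div (d + 1)) ^ (card (UNIV :: 'n set) - 1).
               card (S j) = (d + 1) ^ (card (UNIV :: 'n set) - 1) \<and> interpolation_set d P (S j)) \<and>
           (\<forall>j < (card (UNIV :: 'a set) div (d + 1)) ^ (card (UNIV :: 'n set) - 1).
              \<forall>k < (card (UNIV :: 'a set) div (d + 1)) ^ (card (UNIV :: 'n set) - 1).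
                 j \<noteq> k \<longrightarrow> disjoint_under_mult (S j) (S k))"
proof -
  define m where "m = card (UNIV :: 'a set) div (d + 1)"
  obtain B :: "nat \<Rightarrow> 'a set" where card_B: "\<And>t. t < m \<Longrightarrow> card (B t) = d + 1"
      and disj_B: "disjoint_family_on B {..<m}"
    using ex_disjoint_blocks[of "UNIV :: 'a set" "d + 1"] unfolding m_def by auto
  obtain i0 :: 'n where True by simp
  obtain h where h_lt: "\<And>j i. j < m ^ (card (UNIV :: 'n set) - 1) \<Longrightarrow> i \<noteq> i0 \<Longrightarrow> h j i < m"
      and h_inj: "\<And>j k. j < m ^ (card (UNIV :: 'n set) - 1) \<Longrightarrow> k < m ^ (card (UNIV :: 'n set) - 1) \<Longrightarrow>
         j \<noteq> k \<Longrightarrow> \<exists>i. i \<noteq> i0 \<and> h j i \<noteq> h k i"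
    using ex_enum_funs_except by blast
  define S where "S j = unit_slice_grid i0 (\<lambda>i. B (h j i))" for j
  have "card (S j) = (d + 1) ^ (card (UNIV :: 'n set) - 1) \<and> interpolation_set d P (S j)"
    if "j < m ^ (card (UNIV :: 'n set) - 1)" for j
    unfolding S_def using that h_lt card_B
    by (simp add: card_unit_slice_grid interpolation_set_unit_slice_grid)
  moreover have "disjoint_under_mult (S j) (S k)"
    if jk: "j < m ^ (card (UNIV :: 'n set) - 1)" "k < m ^ (card (UNIV :: 'n set) - 1)" "j \<noteq> k"
    for j k
  proof -
    obtain i where i: "i \<noteq> i0" "h j i \<noteq> h k i" using h_inj[OF jk] by blast
    have "B (h j i) \<inter> B (h k i) = {}"
      using jk h_lt i by (intro disjoint_family_onD[OF disj_B]) auto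
    then show ?thesis
      unfolding S_def by (rule disjoint_under_mult_unit_slice_grid[OF i(1)])
  qed
  ultimately show ?thesis
    unfolding m_def[symmetric] by (intro exI[of _ S]) blast
qed
end
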